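(* Let $\{(X_i,d_i)\}_{i\in\mathbb{N}_0}$ be complete metric spaces, $C_i\subseteq X_i$ nonempty compact sets with $\mathrm{diam}(C_i)\le D$ for all $i$, and $T_i:X_i\to X_{i-1}$ ($i\in\mathbb{N}$) continuous maps with $T_i(C_i)\subseteq C_{i-1}$ and $s_i:=\mathrm{Lip}_{C_i}(T_i)<\infty$. If $\sum_{k=1}^\infty\prod_{i=1}^k s_i<\infty$, then there is a point $p\in C_0$ such that for every base sequence $\bar x$ the backward staircase trajectory $p_k(\bar x)$ converges to $p$.
   Context: For $T:X\to Y$ between metric spaces and $C\subseteq X$, $\mathrm{Lip}_C(T)=\sup_{a,b\in C,a\neq b}d_Y(T(a),T(b))/d_X(a,b)$. A base sequence is $\bar x=\{x_i\}_{i\in\mathbb{N}}$ with $x_i\in C_i$, and the backward staircase trajectory with respect to $\bar x$ is $p_k(\bar x)=T_1\circ T_2\circ\cdots\circ T_k(x_k)\in X_0$, $k\in\mathbb{N}$. *)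

theory Defs
  imports "HOL-Analysis.Analysis"
begin

definition lip_quotients :: "('a \<Rightarrow> 'a \<Rightarrow> real) \<Rightarrow> ('b \<Rightarrow> 'b \<Rightarrow> real) \<Rightarrow> ('a \<Rightarrow> 'b) \<Rightarrow> 'a set \<Rightarrow> real set" where
  "lip_quotients dX dY T C = {dY (T a) (T b) / dX a b | a b. a \<in> C \<and> b \<in> C \<and> a \<noteq> b}"

text \<open>Lip_C(T) = sup of the difference quotients; the supremum of the empty set is taken to be 0.
  Finiteness of Lip_C(T) is expressed separately by boundedness of the quotient set.\<close>
definition Lip_on :: "('a \<Rightarrow> 'a \<Rightarrow> real) \<Rightarrow> ('b \<Rightarrow> 'b \<Rightarrow> real) \<Rightarrow> ('a \<Rightarrow> 'b) \<Rightarrow> 'a set \<Rightarrow> real" where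
  "Lip_on dX dY T C = (if lip_quotients dX dY T C = {} then 0 else Sup (lip_quotients dX dY T C))"

fun back_comp :: "(nat \<Rightarrow> 'a \<Rightarrow> 'a) \<Rightarrow> nat \<Rightarrow> 'a \<Rightarrow> 'a" where
  "back_comp T 0 = id"
| "back_comp T (Suc k) = back_comp T k \<circ> T (Suc k)"

definition staircase :: "(nat \<Rightarrow> 'a \<Rightarrow> 'a) \<Rightarrow> (nat \<Rightarrow> 'a) \<Rightarrow> nat \<Rightarrow> 'a" where
  "staircase T x k = back_comp T k (x k)"

end

theory Submission
  imports Defs
begin

text \<open>Let P k = s_1 \<cdots> s_k. The composite T_1 \<circ> \<cdots> \<circ> T_k is P k-Lipschitz on C_k, so
  any two of its values on C_k are at distance at most D \<cdot> P k. As p_(k+1) is the value of the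
  same composite at T_(k+1)(x_(k+1)) \<in> C_k, this bounds both the steps of one trajectory and the
  distance between the k-th points of two trajectories. Summability of P makes every trajectory
  Cauchy, hence convergent in the closed set C_0, and P k \<longlonglongrightarrow> 0 forces all limits to coincide.\<close>

lemma mdist_le_Lip_on:
  assumes bdd: "bdd_above (lip_quotients (mdist A) (mdist B) f S)"
    and S: "S \<subseteq> mspace A" and fS: "f ` S \<subseteq> mspace B" and a: "a \<in> S" and b: "b \<in> S"
  shows "mdist B (f a) (f b) \<le> Lip_on (mdist A) (mdist B) f S * mdist A a b"
proof (cases "a = b")
  case True
  have "f b \<in> mspace B" "b \<in> mspace A"
    using b S fS by auto
  then show ?thesis
    using True by (simp add: Metric_space.mdist_zero[OF Metric_space_mspace_mdist])
next
  case False
  let ?q = "mdist B (f a) (f b) / mdist A a b"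
  have q: "?q \<in> lip_quotients (mdist A) (mdist B) f S"
    unfolding lip_quotients_def using a b False by blast
  then have "?q \<le> Lip_on (mdist A) (mdist B) f S"
    unfolding Lip_on_def using cSup_upper[OF q bdd] by auto
  moreover have "0 < mdist A a b"
    using False a b S by (meson Metric_space.mdist_pos_less Metric_space_mspace_mdist subsetD)
  ultimately show ?thesis by (simp add: divide_le_eq)
qed

lemma Lip_on_nonneg:
  assumes "bdd_above (lip_quotients (mdist A) (mdist B) f S)"
  shows "0 \<le> Lip_on (mdist A) (mdist B) f S"
proof (cases "lip_quotients (mdist A) (mdist B) f S = {}")
  case False
  then obtain q where q: "q \<in> lip_quotients (mdist A) (mdist B) f S" by blast
  then have "0 \<le> q" unfolding lip_quotients_def by auto
  then show ?thesis
    using False cSup_upper2[OF q _ assms] unfolding Lip_on_def by simp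
qed (simp add: Lip_on_def)

context Metric_space
begin

lemma mdist_le_sum_steps:
  assumes "range f \<subseteq> M" and "\<And>n. d (f n) (f (Suc n)) \<le> b n" and "m \<le> n"
  shows "d (f m) (f n) \<le> (\<Sum>k\<in>{m..<n}. b k)"
  using \<open>m \<le> n\<close>
proof (induction n rule: dec_induct)
  case base
  then show ?case using assms(1) by (simp add: range_subsetD)
next
  case (step n)
  have "d (f m) (f (Suc n)) \<le> d (f m) (f n) + d (f n) (f (Suc n))"
    using assms(1) by (intro triangle) auto
  also have "\<dots> \<le> (\<Sum>k\<in>{m..<n}. b k) + b n"
    using step.IH assms(2) by (rule add_mono)
  finally show ?case using step.hyps by simp
qed

lemma MCauchy_summable_steps:
  assumes range: "range f \<subseteq> M" and steps: "\<And>n. d (f n) (f (Suc n)) \<le> b n"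
    and "summable b"
  shows "MCauchy f"
  unfolding MCauchy_def
proof (intro conjI allI impI range)
  fix e :: real assume "e > 0"
  then obtain N where N: "\<And>m n. m \<ge> N \<Longrightarrow> norm (\<Sum>k\<in>{m..<n}. b k) < e"
    using summable_Cauchy[THEN iffD1, OF \<open>summable b\<close>] \<open>e > 0\<close> by blast
  have close: "d (f m) (f n) < e" if "N \<le> m" "m \<le> n" for m n
  proof -
    have "d (f m) (f n) \<le> (\<Sum>k\<in>{m..<n}. b k)"
      using range steps that(2) by (rule mdist_le_sum_steps)
    also have "\<dots> < e"
      using N[OF that(1), of n] by simp
    finally show ?thesis .
  qed
  show "\<exists>N. \<forall>n n'. N \<le> n \<longrightarrow> N \<le> n' \<longrightarrow> d (f n) (f n') < e"
    by (metis close commute nle_le)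
qed

lemma limitin_dist_null_transform:
  assumes "limitin mtopology f l F" and "eventually (\<lambda>x. g x \<in> M) F"
    and "((\<lambda>x. d (g x) (f x)) \<longlongrightarrow> 0) F"
  shows "limitin mtopology g l F"
proof -
  have l: "l \<in> M" and f: "eventually (\<lambda>x. f x \<in> M) F" and fl: "((\<lambda>x. d (f x) l) \<longlongrightarrow> 0) F"
    using assms(1) unfolding limitin_metric_dist_null by auto
  have "eventually (\<lambda>x. norm (d (g x) l) \<le> d (g x) (f x) + d (f x) l) F"
    using assms(2) f by eventually_elim (use l triangle in auto)
  moreover have "((\<lambda>x. d (g x) (f x) + d (f x) l) \<longlongrightarrow> 0) F"
    using tendsto_add[OF assms(3) fl] by simp
  ultimately have "((\<lambda>x. d (g x) l) \<longlongrightarrow> 0) F"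
    by (rule Lim_null_comparison)
  then show ?thesis
    using l assms(2) unfolding limitin_metric_dist_null by auto
qed

end

locale backward_system =
  fixes X :: "nat \<Rightarrow> 'a metric" and C :: "nat \<Rightarrow> 'a set" and T :: "nat \<Rightarrow> 'a \<Rightarrow> 'a"
    and s :: "nat \<Rightarrow> real"
  assumes C_sub: "C i \<subseteq> mspace (X i)"
    and maps_to: "i \<ge> 1 \<Longrightarrow> a \<in> C i \<Longrightarrow> T i a \<in> C (i - 1)"
    and lipschitz: "i \<ge> 1 \<Longrightarrow> a \<in> C i \<Longrightarrow> b \<in> C i \<Longrightarrow>
      mdist (X (i - 1)) (T i a) (T i b) \<le> s i * mdist (X i) a b"
    and s_nonneg: "i \<ge> 1 \<Longrightarrow> 0 \<le> s i"
begin

sublocale X0: Metric_space "mspace (X 0)" "mdist (X 0)"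
  by simp

definition lip_prod :: "nat \<Rightarrow> real" where
  "lip_prod k = (\<Prod>i\<in>{1..k}. s i)"

lemma lip_prod_nonneg: "0 \<le> lip_prod k"
  unfolding lip_prod_def by (rule prod_nonneg) (simp add: s_nonneg)

lemma lip_prod_Suc: "lip_prod (Suc k) = lip_prod k * s (Suc k)"
  unfolding lip_prod_def by (simp add: prod.nat_ivl_Suc')

lemma back_comp_in: "a \<in> C k \<Longrightarrow> back_comp T k a \<in> C 0"
proof (induction k arbitrary: a)
  case (Suc k)
  then show ?case using maps_to[of "Suc k" a] by simp
qed simp

lemma mdist_back_comp_le:
  assumes "a \<in> C k" and "b \<in> C k"
  shows "mdist (X 0) (back_comp T k a) (back_comp T k b) \<le> lip_prod k * mdist (X k) a b"
  using assms
proof (induction k arbitrary: a b)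
  case 0
  then show ?case by (simp add: lip_prod_def)
next
  case (Suc k)
  have Ta: "T (Suc k) a \<in> C k" and Tb: "T (Suc k) b \<in> C k"
    using Suc.prems maps_to[of "Suc k"] by auto
  have "mdist (X 0) (back_comp T (Suc k) a) (back_comp T (Suc k) b)
      \<le> lip_prod k * mdist (X k) (T (Suc k) a) (T (Suc k) b)"
    using Suc.IH[OF Ta Tb] by simp
  also have "\<dots> \<le> lip_prod k * (s (Suc k) * mdist (X (Suc k)) a b)"
    using lipschitz[of "Suc k" a b] Suc.prems lip_prod_nonneg by (simp add: mult_left_mono)
  finally show ?case by (simp add: lip_prod_Suc mult_ac)
qed

context
  fixes D :: real
  assumes diam: "\<And>i a b. a \<in> C i \<Longrightarrow> b \<in> C i \<Longrightarrow> mdist (X i) a b \<le> D"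
begin

lemma mdist_back_comp_le_diam:
  assumes "a \<in> C k" and "b \<in> C k"
  shows "mdist (X 0) (back_comp T k a) (back_comp T k b) \<le> D * lip_prod k"
proof -
  have "mdist (X 0) (back_comp T k a) (back_comp T k b) \<le> lip_prod k * mdist (X k) a b"
    using assms by (rule mdist_back_comp_le)
  also have "\<dots> \<le> lip_prod k * D"
    using diam[OF assms] lip_prod_nonneg by (rule mult_left_mono)
  finally show ?thesis by (simp add: mult.commute)
qed

context
  fixes x :: "nat \<Rightarrow> 'a"
  assumes base: "\<And>i. x i \<in> C i"
begin

lemma staircase_in: "staircase T x k \<in> C 0"
  unfolding staircase_def by (rule back_comp_in[OF base])

lemma mdist_staircase_Suc_le:
  "mdist (X 0) (staircase T x k) (staircase T x (Suc k)) \<le> D * lip_prod k"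
  unfolding staircase_def
  using mdist_back_comp_le_diam[OF base maps_to[of "Suc k", OF _ base]] by simp

lemma staircase_MCauchy:
  assumes "summable lip_prod"
  shows "X0.MCauchy (staircase T x)"
proof (rule X0.MCauchy_summable_steps)
  show "range (staircase T x) \<subseteq> mspace (X 0)"
    using staircase_in C_sub by blast
  show "summable (\<lambda>k. D * lip_prod k)"
    using assms by (rule summable_mult)
qed (rule mdist_staircase_Suc_le)

lemma staircase_convergent:
  assumes "X0.mcomplete" and "closedin X0.mtopology (C 0)" and "summable lip_prod"
  shows "\<exists>p \<in> C 0. limitin X0.mtopology (staircase T x) p sequentially"
proof -
  obtain p where p: "limitin X0.mtopology (staircase T x) p sequentially"
    using assms(1) staircase_MCauchy[OF assms(3)] unfolding X0.mcomplete_def by blast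
  then have "p \<in> C 0"
    using limitin_closedin[OF p assms(2)] staircase_in by simp
  with p show ?thesis by blast
qed

lemma mdist_staircase_le:
  assumes "\<And>i. y i \<in> C i"
  shows "mdist (X 0) (staircase T x k) (staircase T y k) \<le> D * lip_prod k"
  unfolding staircase_def by (rule mdist_back_comp_le_diam[OF base assms])

end

lemma staircase_limitin_independent:
  assumes "lip_prod \<longlonglongrightarrow> 0" and x: "\<And>i. x i \<in> C i" and y: "\<And>i. y i \<in> C i"
    and "limitin X0.mtopology (staircase T y) p sequentially"
  shows "limitin X0.mtopology (staircase T x) p sequentially"
proof (rule X0.limitin_dist_null_transform[OF assms(4)])
  show "eventually (\<lambda>k. staircase T x k \<in> mspace (X 0)) sequentially"
    using staircase_in[OF x] C_sub by (intro always_eventually) blast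
  have "\<forall>k. norm (mdist (X 0) (staircase T x k) (staircase T y k)) \<le> D * lip_prod k"
    using mdist_staircase_le[OF x y] by simp
  moreover have "(\<lambda>k. D * lip_prod k) \<longlonglongrightarrow> 0"
    using tendsto_mult_right_zero[OF assms(1)] by simp
  ultimately show "(\<lambda>k. mdist (X 0) (staircase T x k) (staircase T y k)) \<longlonglongrightarrow> 0"
    by (rule Lim_null_comparison[OF always_eventually])
qed

end

end

lemma backward_system_Lip_on:
  assumes C_sub: "\<And>i. C i \<subseteq> mspace (X i)"
    and T_C: "\<And>i. i \<ge> 1 \<Longrightarrow> T i ` C i \<subseteq> C (i - 1)"
    and Lip_fin: "\<And>i. i \<ge> 1 \<Longrightarrow> bdd_above (lip_quotients (mdist (X i)) (mdist (X (i - 1))) (T i) (C i))"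
  shows "backward_system X C T (\<lambda>i. Lip_on (mdist (X i)) (mdist (X (i - 1))) (T i) (C i))"
proof
  fix i :: nat and a b assume i: "i \<ge> 1"
  show "0 \<le> Lip_on (mdist (X i)) (mdist (X (i - 1))) (T i) (C i)"
    using Lip_fin[OF i] by (rule Lip_on_nonneg)
  assume a: "a \<in> C i" and b: "b \<in> C i"
  show "T i a \<in> C (i - 1)"
    using T_C[OF i] a by blast
  have "T i ` C i \<subseteq> mspace (X (i - 1))"
    using T_C[OF i] C_sub by blast
  then show "mdist (X (i - 1)) (T i a) (T i b)
      \<le> Lip_on (mdist (X i)) (mdist (X (i - 1))) (T i) (C i) * mdist (X i) a b"
    using Lip_fin[OF i] C_sub a b by (intro mdist_le_Lip_on)
qed (rule C_sub)

theorem mainTheorem7: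
  fixes X :: "nat \<Rightarrow> 'a metric"
    and C :: "nat \<Rightarrow> 'a set"
    and T :: "nat \<Rightarrow> 'a \<Rightarrow> 'a"
    and D :: real
  assumes complete: "\<And>i. mcomplete_of (X i)"
    and C_sub: "\<And>i. C i \<subseteq> mspace (X i)"
    and C_ne: "\<And>i. C i \<noteq> {}"
    and C_compact: "\<And>i. compactin (mtopology_of (X i)) (C i)"
    and C_diam: "\<And>i a b. a \<in> C i \<Longrightarrow> b \<in> C i \<Longrightarrow> mdist (X i) a b \<le> D"
    and T_cont: "\<And>i. i \<ge> 1 \<Longrightarrow> continuous_map (mtopology_of (X i)) (mtopology_of (X (i - 1))) (T i)"
    and T_C: "\<And>i. i \<ge> 1 \<Longrightarrow> T i ` C i \<subseteq> C (i - 1)"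
    and Lip_fin: "\<And>i. i \<ge> 1 \<Longrightarrow> bdd_above (lip_quotients (mdist (X i)) (mdist (X (i - 1))) (T i) (C i))"
    and summ: "summable (\<lambda>k. \<Prod>i\<in>{1..Suc k}. Lip_on (mdist (X i)) (mdist (X (i - 1))) (T i) (C i))"
  shows "\<exists>p \<in> C 0. \<forall>x. (\<forall>i\<ge>1. x i \<in> C i) \<longrightarrow>
           limitin (mtopology_of (X 0)) (staircase T x) p sequentially"
proof -
  interpret backward_system X C T "\<lambda>i. Lip_on (mdist (X i)) (mdist (X (i - 1))) (T i) (C i)"
    using C_sub T_C Lip_fin by (rule backward_system_Lip_on)
  have "summable (\<lambda>k. lip_prod (Suc k))"
    using summ by (simp only: lip_prod_def)
  then have summable: "summable lip_prod"
    by (simp only: summable_Suc_iff)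
  have closed: "closedin X0.mtopology (C 0)"
    using C_compact[of 0] X0.Hausdorff_space_mtopology compactin_imp_closedin
    by (simp add: mtopology_of_def)
  have "\<forall>i. \<exists>a. a \<in> C i"
    using C_ne by blast
  then obtain x0 where x0: "\<And>i. x0 i \<in> C i"
    by metis
  then obtain p where "p \<in> C 0" and lim0: "limitin X0.mtopology (staircase T x0) p sequentially"
    using staircase_convergent[OF C_diam x0 _ closed summable] complete[of 0]
    by (auto simp: mcomplete_of_def)
  moreover have "limitin X0.mtopology (staircase T x) p sequentially" if "\<forall>i\<ge>1. x i \<in> C i" for x
  proof -
    \<comment> \<open>\<open>x 0\<close> is unconstrained but never enters \<open>staircase T x k\<close> for \<open>k \<ge> 1\<close>; move it into \<open>C 0\<close>.\<close>
    let ?x = "x(0 := x0 0)"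
    have "limitin X0.mtopology (staircase T ?x) p sequentially"
      using staircase_limitin_independent[OF C_diam summable_LIMSEQ_zero[OF summable] _ x0 lim0]
        that x0 by (simp add: not_less_eq_eq)
    moreover have "eventually (\<lambda>k. staircase T ?x k = staircase T x k) sequentially"
      using eventually_gt_at_top[of 0] by eventually_elim (simp add: staircase_def)
    ultimately show ?thesis
      by (rule limitin_transform_eventually[rotated])
  qed
  ultimately show ?thesis by (auto simp: mtopology_of_def)
qed

end
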